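(* (i) For every $\hat{\mathbf u}\in\mathbf W$, any $\psi\in\Phi$ satisfying $(\kappa(\psi),\varphi)+c(\hat{\mathbf u};\psi,\varphi)+d(\psi,\varphi)=G(\varphi)$ for all $\varphi\in\Phi_0$ obeys $\|\psi\|_{1,\Omega}\le 2C_p^2\varepsilon^{-1}\|g\|_{0,\Omega}$. (ii) For every $\hat\psi\in\mathrm Z$, any $(\mathbf u,p)\in\mathbf V\times Q$ satisfying $a(\mathbf u,\mathbf v)+A^{\hat\psi}(\mathbf u,\mathbf v)+b(\mathbf v,p)=F^{\hat\psi}(\mathbf v)$ for all $\mathbf v\in\mathbf V$ and $b(\mathbf u,q)=0$ for all $q\in Q$ obeys $\|\mathbf u\|_{1,\Omega}\le 2C_p^2\mu^{-1}\bigl(\|\mathbf f\|_{0,\Omega}+\bar E\|g\|_{0,\Omega}+\bar K\bar E\|\hat\psi\|_{1,\Omega}\bigr)$.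
   Context: Let $\Omega\subset\mathbb R^n$, $n\in\{2,3\}$, be a bounded Lipschitz domain with $\partial\Omega=\Gamma_D\cup\Gamma_N$, $\Gamma_D$ of positive surface measure. $\|\cdot\|_{0,\Omega}$ is the $L^2(\Omega)$ norm, $\|\cdot\|_{1,\Omega}$, $|\cdot|_{1,\Omega}$ the $H^1(\Omega)$ norm and seminorm; $(\cdot,\cdot)$ the $L^2$ inner product. Data: $\mu>0$, $\varepsilon>0$, $\mathbf f\in L^2(\Omega)^n$, $g\in L^2(\Omega)$, $\mathbf E\in L^\infty(\Omega)^n$ with $|\mathbf E|\le\bar E$ a.e.; $\kappa(s)=k_0\sinh(k_1s)$, $k_0,k_1>0$; fixed reals $\alpha\le0\le\beta$ and constants $\bar K,\underline K>0$ with $\underline K|s_1-s_2|\le|\kappa(s_1)-\kappa(s_2)|\le\bar K|s_1-s_2|$ for $s_1,s_2\in[\alpha,\beta]$. $C_{Sob}>0$ satisfies $\|\phi\|_{L^4(\Omega)}\le C_{Sob}\|\phi\|_{1,\Omega}$ for all $\phi\in H^1(\Omega)$; $C_p>0$ satisfies $\|\phi\|_{1,\Omega}\le C_p|\phi|_{1,\Omega}$ for all $\phi\in H^1(\Omega)$ (or $H^1(\Omega)^n$) vanishing on $\Gamma_D$. $\mathbf V=\{\mathbf v\in H^1(\Omega)^n:\mathbf v=\mathbf 0\text{ on }\Gamma_D\}$, $\Phi_0=\{\varphi\in H^1(\Omega):\varphi=0\text{ on }\Gamma_D\}$, $\Phi=\{\varphi\in\Phi_0:\alpha\le\varphi\le\beta\text{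 a.e.}\}$, $Q=L^2(\Omega)$. Forms: $a(\mathbf u,\mathbf v)=\mu\int_\Omega\nabla\mathbf u:\nabla\mathbf v$, $b(\mathbf v,q)=-\int_\Omega(\operatorname{div}\mathbf v)q$, $c(\mathbf v;\psi,\varphi)=\int_\Omega(\mathbf v\cdot\nabla\psi)\varphi$, $d(\psi,\varphi)=\varepsilon\int_\Omega\nabla\psi\cdot\nabla\varphi$, $A^{\hat\psi}(\mathbf u,\mathbf v)=\int_\Omega(\mathbf u\cdot\nabla\hat\psi)(\mathbf E\cdot\mathbf v)$, $F^{\hat\psi}(\mathbf v)=\int_\Omega\{\mathbf f+[g-\kappa(\hat\psi)]\mathbf E\}\cdot\mathbf v$, $G(\varphi)=\int_\Omega g\varphi$. $\mathrm Z=\{\hat\psi\in\Phi:\|\hat\psi\|_{1,\Omega}\le\mu[2C_p^2C_{Sob}^2\bar E]^{-1}\}$, $\mathbf W=\{\hat{\mathbf u}\in\mathbf V:\|\hat{\mathbf u}\|_{1,\Omega}\le\varepsilon[2C_p^2C_{Sob}^2]^{-1}\}$. *)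

theory Defs
  imports "HOL-Analysis.Analysis"
begin

definition intO :: "(real^'n) set \<Rightarrow> (real^'n \<Rightarrow> real) \<Rightarrow> real" where
  "intO \<Omega> f = set_lebesgue_integral lebesgue \<Omega> f"

definition L2 :: "(real^'n) set \<Rightarrow> (real^'n \<Rightarrow> real) \<Rightarrow> bool" where
  "L2 \<Omega> f \<longleftrightarrow> set_borel_measurable lebesgue \<Omega> f \<and> set_integrable lebesgue \<Omega> (\<lambda>x. (f x)^2)"

definition L2norm :: "(real^'n) set \<Rightarrow> (real^'n \<Rightarrow> real) \<Rightarrow> real" where
  "L2norm \<Omega> f = sqrt (intO \<Omega> (\<lambda>x. (f x)^2))"

definition L2normv :: "(real^'n) set \<Rightarrow> (real^'n \<Rightarrow> real^'n) \<Rightarrow> real" where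
  "L2normv \<Omega> f = sqrt (intO \<Omega> (\<lambda>x. (norm (f x))^2))"

text \<open>C-infinity functions on the whole space (all partial derivatives of all orders exist and
  are continuous), via a coinductive characterisation.\<close>
definition pderiv_at :: "'n \<Rightarrow> (real^'n \<Rightarrow> real) \<Rightarrow> real^'n \<Rightarrow> real" where
  "pderiv_at i \<phi> x = frechet_derivative \<phi> (at x) (axis i 1)"

coinductive Cinf :: "(real^'n \<Rightarrow> real) \<Rightarrow> bool" where
  "\<phi> differentiable_on UNIV \<Longrightarrow> (\<forall>i. Cinf (pderiv_at i \<phi>)) \<Longrightarrow> Cinf \<phi>"

definition supp :: "(real^'n \<Rightarrow> real) \<Rightarrow> (real^'n) set" where
  "supp \<phi> = closure {x. \<phi> x \<noteq> 0}"

definition test_fun :: "(real^'n) set \<Rightarrow> (real^'n \<Rightarrow> real) \<Rightarrow> bool" where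
  "test_fun \<Omega> \<phi> \<longleftrightarrow> Cinf \<phi> \<and> compact (supp \<phi>) \<and> supp \<phi> \<subseteq> \<Omega>"

definition weak_grad :: "(real^'n) set \<Rightarrow> (real^'n \<Rightarrow> real) \<Rightarrow> (real^'n \<Rightarrow> real^'n) \<Rightarrow> bool" where
  "weak_grad \<Omega> u G \<longleftrightarrow> (\<forall>i. L2 \<Omega> (\<lambda>x. G x $ i)) \<and>
     (\<forall>\<phi>. test_fun \<Omega> \<phi> \<longrightarrow> (\<forall>i. intO \<Omega> (\<lambda>x. u x * pderiv_at i \<phi> x) = - intO \<Omega> (\<lambda>x. G x $ i * \<phi> x)))"

definition H1 :: "(real^'n) set \<Rightarrow> (real^'n \<Rightarrow> real) \<Rightarrow> bool" where
  "H1 \<Omega> u \<longleftrightarrow> L2 \<Omega> u \<and> (\<exists>G. weak_grad \<Omega> u G)"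

definition wgrad :: "(real^'n) set \<Rightarrow> (real^'n \<Rightarrow> real) \<Rightarrow> real^'n \<Rightarrow> real^'n" where
  "wgrad \<Omega> u = (SOME G. weak_grad \<Omega> u G)"

definition H1semi :: "(real^'n) set \<Rightarrow> (real^'n \<Rightarrow> real) \<Rightarrow> real" where
  "H1semi \<Omega> u = sqrt (intO \<Omega> (\<lambda>x. (norm (wgrad \<Omega> u x))^2))"

definition H1norm :: "(real^'n) set \<Rightarrow> (real^'n \<Rightarrow> real) \<Rightarrow> real" where
  "H1norm \<Omega> u = sqrt ((L2norm \<Omega> u)^2 + (H1semi \<Omega> u)^2)"

definition comp :: "(real^'n \<Rightarrow> real^'n) \<Rightarrow> 'n \<Rightarrow> real^'n \<Rightarrow> real" where
  "comp v i = (\<lambda>x. v x $ i)"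

definition H1v :: "(real^'n) set \<Rightarrow> (real^'n \<Rightarrow> real^'n) \<Rightarrow> bool" where
  "H1v \<Omega> v \<longleftrightarrow> (\<forall>i. H1 \<Omega> (comp v i))"

definition H1semiv :: "(real^'n) set \<Rightarrow> (real^'n \<Rightarrow> real^'n) \<Rightarrow> real" where
  "H1semiv \<Omega> v = sqrt (\<Sum>i\<in>UNIV. (H1semi \<Omega> (comp v i))^2)"

definition H1normv :: "(real^'n) set \<Rightarrow> (real^'n \<Rightarrow> real^'n) \<Rightarrow> real" where
  "H1normv \<Omega> v = sqrt (\<Sum>i\<in>UNIV. (H1norm \<Omega> (comp v i))^2)"

definition wdiv :: "(real^'n) set \<Rightarrow> (real^'n \<Rightarrow> real^'n) \<Rightarrow> real^'n \<Rightarrow> real" where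
  "wdiv \<Omega> v x = (\<Sum>i\<in>UNIV. wgrad \<Omega> (comp v i) x $ i)"

text \<open>Functions in H^1(Omega) vanishing on Gamma_D: H^1-limits of smooth compactly supported
  functions whose support avoids (the closure of) Gamma_D.\<close>
definition Phi0 :: "(real^'n) set \<Rightarrow> (real^'n) set \<Rightarrow> (real^'n \<Rightarrow> real) set" where
  "Phi0 \<Omega> \<Gamma>D = {\<phi>. H1 \<Omega> \<phi> \<and> (\<exists>s. (\<forall>k. Cinf (s k) \<and> compact (supp (s k)) \<and> supp (s k) \<inter> closure \<Gamma>D = {})
       \<and> (\<lambda>k. H1norm \<Omega> (\<lambda>x. s k x - \<phi> x)) \<longlonglongrightarrow> 0)}"

definition Vsp :: "(real^'n) set \<Rightarrow> (real^'n) set \<Rightarrow> (real^'n \<Rightarrow> real^'n) set" where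
  "Vsp \<Omega> \<Gamma>D = {v. \<forall>i. comp v i \<in> Phi0 \<Omega> \<Gamma>D}"

definition Phi :: "(real^'n) set \<Rightarrow> (real^'n) set \<Rightarrow> real \<Rightarrow> real \<Rightarrow> (real^'n \<Rightarrow> real) set" where
  "Phi \<Omega> \<Gamma>D \<alpha> \<beta> = {\<phi> \<in> Phi0 \<Omega> \<Gamma>D. AE x in lebesgue. x \<in> \<Omega> \<longrightarrow> \<alpha> \<le> \<phi> x \<and> \<phi> x \<le> \<beta>}"

definition kappa :: "real \<Rightarrow> real \<Rightarrow> real \<Rightarrow> real" where
  "kappa k0 k1 s = k0 * sinh (k1 * s)"

definition form_a :: "real \<Rightarrow> (real^'n) set \<Rightarrow> (real^'n \<Rightarrow> real^'n) \<Rightarrow> (real^'n \<Rightarrow> real^'n) \<Rightarrow> real" where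
  "form_a \<mu> \<Omega> u v = \<mu> * intO \<Omega> (\<lambda>x. \<Sum>i\<in>UNIV. wgrad \<Omega> (comp u i) x \<bullet> wgrad \<Omega> (comp v i) x)"

definition form_b :: "(real^'n) set \<Rightarrow> (real^'n \<Rightarrow> real^'n) \<Rightarrow> (real^'n \<Rightarrow> real) \<Rightarrow> real" where
  "form_b \<Omega> v q = - intO \<Omega> (\<lambda>x. wdiv \<Omega> v x * q x)"

definition form_c :: "(real^'n) set \<Rightarrow> (real^'n \<Rightarrow> real^'n) \<Rightarrow> (real^'n \<Rightarrow> real) \<Rightarrow> (real^'n \<Rightarrow> real) \<Rightarrow> real" where
  "form_c \<Omega> v \<psi> \<phi> = intO \<Omega> (\<lambda>x. (v x \<bullet> wgrad \<Omega> \<psi> x) * \<phi> x)"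

definition form_d :: "real \<Rightarrow> (real^'n) set \<Rightarrow> (real^'n \<Rightarrow> real) \<Rightarrow> (real^'n \<Rightarrow> real) \<Rightarrow> real" where
  "form_d \<epsilon> \<Omega> \<psi> \<phi> = \<epsilon> * intO \<Omega> (\<lambda>x. wgrad \<Omega> \<psi> x \<bullet> wgrad \<Omega> \<phi> x)"

definition form_A :: "(real^'n) set \<Rightarrow> (real^'n \<Rightarrow> real^'n) \<Rightarrow> (real^'n \<Rightarrow> real)
    \<Rightarrow> (real^'n \<Rightarrow> real^'n) \<Rightarrow> (real^'n \<Rightarrow> real^'n) \<Rightarrow> real" where
  "form_A \<Omega> E \<psi>h u v = intO \<Omega> (\<lambda>x. (u x \<bullet> wgrad \<Omega> \<psi>h x) * (E x \<bullet> v x))"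

definition form_F :: "(real^'n) set \<Rightarrow> (real \<Rightarrow> real) \<Rightarrow> (real^'n \<Rightarrow> real^'n) \<Rightarrow> (real^'n \<Rightarrow> real)
    \<Rightarrow> (real^'n \<Rightarrow> real^'n) \<Rightarrow> (real^'n \<Rightarrow> real) \<Rightarrow> (real^'n \<Rightarrow> real^'n) \<Rightarrow> real" where
  "form_F \<Omega> \<kappa> f g E \<psi>h v = intO \<Omega> (\<lambda>x. (f x + (g x - \<kappa> (\<psi>h x)) *\<^sub>R E x) \<bullet> v x)"

definition form_G :: "(real^'n) set \<Rightarrow> (real^'n \<Rightarrow> real) \<Rightarrow> (real^'n \<Rightarrow> real) \<Rightarrow> real" where
  "form_G \<Omega> g \<phi> = intO \<Omega> (\<lambda>x. g x * \<phi> x)"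

text \<open>Bounded Lipschitz domain: open, bounded, connected, and near each boundary point the
  domain is the strict epigraph (in some unit direction e) of a Lipschitz function of the
  coordinates orthogonal to e.\<close>
definition lipschitz_domain :: "(real^'n) set \<Rightarrow> bool" where
  "lipschitz_domain \<Omega> \<longleftrightarrow> open \<Omega> \<and> bounded \<Omega> \<and> connected \<Omega> \<and> \<Omega> \<noteq> {} \<and>
     (\<forall>x\<in>frontier \<Omega>. \<exists>r>0. \<exists>e::real^'n. \<exists>L. \<exists>h::real^'n \<Rightarrow> real.
        norm e = 1 \<and> L-lipschitz_on UNIV h \<and> (\<forall>y. h y = h (y - (y \<bullet> e) *\<^sub>R e)) \<and>
        \<Omega> \<inter> ball x r = {y \<in> ball x r. y \<bullet> e > h y})"

text \<open>Positive (n-1)-dimensional Hausdorff (surface) measure: the Hausdorff content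
  is positive, i.e. every countable cover by bounded sets has
  sum of diam^(n-1) bounded below by a fixed positive constant.\<close>
definition pos_surface_measure :: "(real^'n) set \<Rightarrow> bool" where
  "pos_surface_measure S \<longleftrightarrow> (\<exists>c>0. \<forall>C::nat \<Rightarrow> (real^'n) set.
     (\<forall>k. bounded (C k)) \<and> S \<subseteq> (\<Union>k. C k) \<longrightarrow>
       ennreal c \<le> (\<Sum>k. ennreal (diameter (C k) ^ (CARD('n) - 1))))"

end

theory Submission
  imports Defs
begin

(* Both bounds are energy estimates: test the potential equation with psi itself and the
   momentum equation with u itself; the pressure term drops out since u is weakly
   divergence free. As sinh is odd and increasing, the reaction term kappa(psi) psi is
   nonnegative. The convection terms c(uh; psi, psi) and A(u, u) are trilinear with one
   gradient factor, so Hoelder (L^4 * L^2 * L^4) and the embedding H^1 into L^4 bound them by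
   Csob^2 Cp^2 ||uh|| |psi|^2 and Csob^2 Cp^2 Ebar ||psi_hat|| |u|^2; the smallness conditions
   defining W and Z make this at most half of the coercive term eps |psi|^2, resp.
   mu |u|^2, so it can be absorbed. What remains is a linear bound on the seminorm, and
   Poincare's inequality turns it into the stated bound on the full norm. *)

lemma ennreal_le_of_power_le:
  assumes "X ^ k \<le> ennreal (B ^ k)" "0 \<le> B" "0 < k"
  shows "X \<le> ennreal B"
proof (cases X)
  case (real x)
  with assms have "x ^ k \<le> B ^ k" by (simp add: ennreal_power ennreal_le_iff)
  with assms real have "x \<le> B" by (metis Suc_pred power_le_imp_le_base)
  with real show ?thesis by simp
next
  case top
  with assms show ?thesis by (simp add: top_unique)
qed

lemma nn_integral_mult_le_L2_bounds:
  fixes a b :: "'a \<Rightarrow> real"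
  assumes "a \<in> borel_measurable M" "b \<in> borel_measurable M"
    and "\<And>x. 0 \<le> a x" "\<And>x. 0 \<le> b x"
    and "(\<integral>\<^sup>+x. ennreal ((a x)\<^sup>2) \<partial>M) \<le> ennreal (A\<^sup>2)"
    and "(\<integral>\<^sup>+x. ennreal ((b x)\<^sup>2) \<partial>M) \<le> ennreal (B\<^sup>2)"
    and "0 \<le> A" "0 \<le> B"
  shows "(\<integral>\<^sup>+x. ennreal (a x * b x) \<partial>M) \<le> ennreal (A * B)"
proof (rule ennreal_le_of_power_le[where k=2])
  have "(\<integral>\<^sup>+x. ennreal (a x * b x) \<partial>M)\<^sup>2
      \<le> (\<integral>\<^sup>+x. ennreal (a x) ^ 2 \<partial>M) * (\<integral>\<^sup>+x. ennreal (b x) ^ 2 \<partial>M)"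
    using Cauchy_Schwarz_nn_integral[of "\<lambda>x. ennreal (a x)" M "\<lambda>x. ennreal (b x)"] assms(1-4)
    by (simp add: ennreal_mult)
  also have "\<dots> \<le> ennreal (A\<^sup>2) * ennreal (B\<^sup>2)"
    using assms by (intro mult_mono) (auto simp: ennreal_power)
  also have "\<dots> = ennreal ((A * B)\<^sup>2)"
    by (simp add: ennreal_mult[symmetric] power_mult_distrib)
  finally show "(\<integral>\<^sup>+x. ennreal (a x * b x) \<partial>M)\<^sup>2 \<le> ennreal ((A * B)\<^sup>2)" .
qed (use assms in auto)

lemma nn_integral_mult3_le_L4_L2_L4_bounds:
  fixes a b c :: "'a \<Rightarrow> real"
  assumes "a \<in> borel_measurable M" "b \<in> borel_measurable M" "c \<in> borel_measurable M"
    and "\<And>x. 0 \<le> a x" "\<And>x. 0 \<le> b x" "\<And>x. 0 \<le> c x"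
    and "(\<integral>\<^sup>+x. ennreal (a x ^ 4) \<partial>M) \<le> ennreal (A ^ 4)"
    and "(\<integral>\<^sup>+x. ennreal ((b x)\<^sup>2) \<partial>M) \<le> ennreal (B\<^sup>2)"
    and "(\<integral>\<^sup>+x. ennreal (c x ^ 4) \<partial>M) \<le> ennreal (C ^ 4)"
    and "0 \<le> A" "0 \<le> B" "0 \<le> C"
  shows "(\<integral>\<^sup>+x. ennreal (a x * b x * c x) \<partial>M) \<le> ennreal (A * B * C)"
proof -
  have "(\<integral>\<^sup>+x. ennreal ((a x)\<^sup>2 * (c x)\<^sup>2) \<partial>M) \<le> ennreal (A\<^sup>2 * C\<^sup>2)"
    by (rule nn_integral_mult_le_L2_bounds) (use assms in \<open>simp_all flip: power_mult\<close>)
  then have "(\<integral>\<^sup>+x. ennreal ((a x * c x)\<^sup>2) \<partial>M) \<le> ennreal ((A * C)\<^sup>2)"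
    by (simp add: power_mult_distrib)
  then have "(\<integral>\<^sup>+x. ennreal ((a x * c x) * b x) \<partial>M) \<le> ennreal ((A * C) * B)"
    using assms by (intro nn_integral_mult_le_L2_bounds) auto
  then show ?thesis by (simp add: mult_ac)
qed

(* Also valid for non-integrable h, whose Bochner integral is 0; this is why all bounds below
   are proved on nonnegative integrals, where no integrability has to be checked. *)
lemma abs_integral_le_of_majorant:
  fixes h k :: "'a \<Rightarrow> real"
  assumes "AE x in M. \<bar>h x\<bar> \<le> k x" "(\<integral>\<^sup>+x. ennreal (k x) \<partial>M) \<le> ennreal B" "0 \<le> B"
  shows "\<bar>integral\<^sup>L M h\<bar> \<le> B"
proof (cases "integrable M h")
  case True
  have "ennreal \<bar>integral\<^sup>L M h\<bar> \<le> (\<integral>\<^sup>+x. ennreal \<bar>h x\<bar> \<partial>M)"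
    using integral_norm_bound_ennreal[OF True] by simp
  also have "\<dots> \<le> (\<integral>\<^sup>+x. ennreal (k x) \<partial>M)"
    using assms(1) by (intro nn_integral_mono_AE) (auto elim: eventually_mono intro: ennreal_leI)
  also have "\<dots> \<le> ennreal B"
    by (rule assms(2))
  finally show ?thesis
    using assms(3) by simp
next
  case False
  then show ?thesis using assms(3) by (simp add: not_integrable_integral_eq)
qed

lemma AE_lebesgue_open_imp_ex:
  assumes "open S" "S \<noteq> {}" "AE x in lebesgue. x \<in> S \<longrightarrow> P x"
  shows "\<exists>x\<in>S. P x"
proof (rule ccontr)
  assume "\<not> (\<exists>x\<in>S. P x)"
  with assms(3) have "AE x \<in> S in lebesgue. x \<in> {}"
    by (auto elim: eventually_mono)
  with assms(1,2) show False
    using mem_closed_if_AE_lebesgue_open[of S "{}"] by blast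
qed

lemma le_of_absorbed_quadratic_bound:
  fixes c S U R Cp :: real
  assumes "c * S\<^sup>2 \<le> R * (Cp * S) + c / 2 * S\<^sup>2"
    and "0 < c" "0 \<le> S" "U \<le> Cp * S" "0 \<le> Cp" "0 \<le> R"
  shows "U \<le> 2 * Cp\<^sup>2 / c * R"
proof -
  have "c / 2 * S * S \<le> R * Cp * S"
    using assms(1) by (simp add: power2_eq_square algebra_simps)
  then have "c / 2 * S \<le> R * Cp"
    using assms(3) by (cases "S = 0") (auto simp: mult_le_cancel_right assms(5,6))
  then have "S \<le> 2 * R * Cp / c"
    using assms(2) by (simp add: field_simps)
  then have "Cp * S \<le> Cp * (2 * R * Cp / c)"
    using assms(5) by (rule mult_left_mono)
  with assms(4) show ?thesis
    by (simp add: power2_eq_square field_simps)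
qed

lemma kappa_mult_self_nonneg: "0 < k0 \<Longrightarrow> 0 < k1 \<Longrightarrow> 0 \<le> kappa k0 k1 s * s"
  by (auto simp: kappa_def zero_le_mult_iff mult_le_0_iff)

lemma kappa_abs_le:
  assumes "\<forall>s1\<in>{\<alpha>..\<beta>}. \<forall>s2\<in>{\<alpha>..\<beta>}. \<bar>kappa k0 k1 s1 - kappa k0 k1 s2\<bar> \<le> Kbar * \<bar>s1 - s2\<bar>"
    and "\<alpha> \<le> 0" "0 \<le> \<beta>" "t \<in> {\<alpha>..\<beta>}"
  shows "\<bar>kappa k0 k1 t\<bar> \<le> Kbar * \<bar>t\<bar>"
  using assms(1)[rule_format, of t 0] assms(2-4) by (simp add: kappa_def)

lemma abs_inner_forcing_le:
  fixes f e u :: "'a::real_inner"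
  assumes "norm e \<le> Ebar" "\<bar>k\<bar> \<le> Kbar * \<bar>t\<bar>"
  shows "\<bar>(f + (g - k) *\<^sub>R e) \<bullet> u\<bar> \<le> (norm f + Ebar * \<bar>g\<bar> + Kbar * Ebar * \<bar>t\<bar>) * norm u"
proof -
  have "\<bar>g - k\<bar> * norm e \<le> (\<bar>g\<bar> + Kbar * \<bar>t\<bar>) * Ebar"
    using assms by (intro mult_mono) auto
  moreover have "norm (f + (g - k) *\<^sub>R e) \<le> norm f + \<bar>g - k\<bar> * norm e"
    by (metis norm_scaleR norm_triangle_ineq)
  ultimately have "norm (f + (g - k) *\<^sub>R e) \<le> norm f + Ebar * \<bar>g\<bar> + Kbar * Ebar * \<bar>t\<bar>"
    by (simp add: algebra_simps)
  then show ?thesis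
    using Cauchy_Schwarz_ineq2[of "f + (g - k) *\<^sub>R e" u] by (meson mult_right_mono norm_ge_zero order_trans)
qed

lemma nn_integral_add_le_ennreal:
  fixes a b :: "'a \<Rightarrow> real"
  assumes "a \<in> borel_measurable M" "b \<in> borel_measurable M" "\<And>x. 0 \<le> a x" "\<And>x. 0 \<le> b x"
    and "(\<integral>\<^sup>+x. ennreal (a x) \<partial>M) \<le> ennreal A" "(\<integral>\<^sup>+x. ennreal (b x) \<partial>M) \<le> ennreal B"
    and "0 \<le> A" "0 \<le> B"
  shows "(\<integral>\<^sup>+x. ennreal (a x + b x) \<partial>M) \<le> ennreal (A + B)"
proof -
  have "(\<integral>\<^sup>+x. ennreal (a x + b x) \<partial>M) = (\<integral>\<^sup>+x. ennreal (a x) \<partial>M) + (\<integral>\<^sup>+x. ennreal (b x) \<partial>M)"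
    using assms(1-4) by (simp add: ennreal_plus nn_integral_add)
  also have "\<dots> \<le> ennreal A + ennreal B"
    using assms(5,6) by (rule add_mono)
  finally show ?thesis
    using assms(7,8) by (simp add: ennreal_plus)
qed

lemma nn_integral_cmult_le_ennreal:
  fixes a :: "'a \<Rightarrow> real"
  assumes "a \<in> borel_measurable M" "\<And>x. 0 \<le> a x"
    and "(\<integral>\<^sup>+x. ennreal (a x) \<partial>M) \<le> ennreal A" "0 \<le> A" "0 \<le> c"
  shows "(\<integral>\<^sup>+x. ennreal (c * a x) \<partial>M) \<le> ennreal (c * A)"
  using assms by (simp add: ennreal_mult nn_integral_cmult mult_left_mono)

lemma power2_norm_vec_eq_sum: "(norm (x::real^'n))\<^sup>2 = (\<Sum>i\<in>UNIV. (x $ i)\<^sup>2)"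
  by (simp add: norm_vec_def L2_set_def sum_nonneg)

lemma borel_measurable_vec_components:
  fixes v :: "'a \<Rightarrow> real^'n"
  assumes "\<And>i. (\<lambda>x. v x $ i) \<in> borel_measurable M"
  shows "v \<in> borel_measurable M"
proof -
  have "(\<lambda>x. v x \<bullet> b) \<in> borel_measurable M" if "b \<in> Basis" for b
  proof -
    from that obtain i where "b = axis i 1"
      unfolding Basis_vec_def Basis_real_def by blast
    then show ?thesis
      using assms[of i] by (simp add: inner_axis)
  qed
  then show ?thesis
    by (rule borel_measurable_euclidean_space[THEN iffD2, rule_format])
qed

lemma intO_nonneg: "(\<And>x. 0 \<le> f x) \<Longrightarrow> 0 \<le> intO \<Omega> f"
  unfolding intO_def set_lebesgue_integral_def by (auto intro!: integral_nonneg_AE)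

lemma L2norm_nonneg: "0 \<le> L2norm \<Omega> f"
  by (simp add: L2norm_def intO_nonneg)

lemma L2norm_sq: "(L2norm \<Omega> f)\<^sup>2 = intO \<Omega> (\<lambda>x. (f x)\<^sup>2)"
  by (simp add: L2norm_def intO_nonneg)

lemma L2normv_eq_L2norm: "L2normv \<Omega> v = L2norm \<Omega> (\<lambda>x. norm (v x))"
  unfolding L2normv_def L2norm_def ..

lemma H1semi_eq_L2norm: "H1semi \<Omega> u = L2norm \<Omega> (\<lambda>x. norm (wgrad \<Omega> u x))"
  unfolding H1semi_def L2norm_def ..

lemma H1semi_nonneg: "0 \<le> H1semi \<Omega> u"
  by (simp add: H1semi_eq_L2norm L2norm_nonneg)

lemma H1norm_nonneg: "0 \<le> H1norm \<Omega> u"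
  by (simp add: H1norm_def)

lemma L2norm_le_H1norm: "L2norm \<Omega> u \<le> H1norm \<Omega> u"
  unfolding H1norm_def by (rule order_trans[OF abs_ge_self real_sqrt_ge_abs1])

lemma H1semi_le_H1norm: "H1semi \<Omega> u \<le> H1norm \<Omega> u"
  unfolding H1norm_def by (rule order_trans[OF abs_ge_self real_sqrt_ge_abs2])

lemma H1normv_nonneg: "0 \<le> H1normv \<Omega> v"
  by (simp add: H1normv_def sum_nonneg)

lemma H1semiv_nonneg: "0 \<le> H1semiv \<Omega> v"
  by (simp add: H1semiv_def sum_nonneg)

lemma H1normv_sq: "(H1normv \<Omega> v)\<^sup>2 = (\<Sum>i\<in>UNIV. (H1norm \<Omega> (comp v i))\<^sup>2)"
  by (simp add: H1normv_def sum_nonneg)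

lemma H1semiv_sq: "(H1semiv \<Omega> v)\<^sup>2 = (\<Sum>i\<in>UNIV. (H1semi \<Omega> (comp v i))\<^sup>2)"
  by (simp add: H1semiv_def sum_nonneg)

lemma H1_wgrad_L2:
  assumes "H1 \<Omega> u"
  shows "L2 \<Omega> (comp (wgrad \<Omega> u) i)"
proof -
  from assms have "\<exists>G. weak_grad \<Omega> u G"
    by (simp add: H1_def)
  then have "weak_grad \<Omega> u (wgrad \<Omega> u)"
    unfolding wgrad_def by (rule someI_ex)
  then show ?thesis
    unfolding weak_grad_def comp_def by blast
qed

lemma Vsp_components_H1: "v \<in> Vsp \<Omega> \<Gamma>D \<Longrightarrow> H1 \<Omega> (comp v i)"
  unfolding Vsp_def Phi0_def by auto

lemma Phi_H1: "\<phi> \<in> Phi \<Omega> \<Gamma>D \<alpha> \<beta> \<Longrightarrow> H1 \<Omega> \<phi>"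
  unfolding Phi_def Phi0_def by auto

lemma form_d_self: "form_d \<epsilon> \<Omega> \<psi> \<psi> = \<epsilon> * (H1semi \<Omega> \<psi>)\<^sup>2"
  unfolding form_d_def H1semi_eq_L2norm L2norm_sq by (simp add: power2_norm_eq_inner)

context
  fixes \<Omega> :: "(real^'n) set"
  assumes \<Omega>_sets: "\<Omega> \<in> sets lebesgue"
begin

lemma intO_eq_integral: "intO \<Omega> f = (\<integral>x. f x \<partial>lebesgue_on \<Omega>)"
  unfolding intO_def set_lebesgue_integral_def using \<Omega>_sets by (simp add: integral_restrict_space)

lemma L2_iff:
  "L2 \<Omega> f \<longleftrightarrow> f \<in> borel_measurable (lebesgue_on \<Omega>) \<and> integrable (lebesgue_on \<Omega>) (\<lambda>x. (f x)\<^sup>2)"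
  unfolding L2_def set_integrable_def set_borel_measurable_def using \<Omega>_sets
  by (simp add: borel_measurable_restrict_space_iff integrable_restrict_space)

lemma nn_integral_sq_eq_L2norm:
  assumes "L2 \<Omega> f"
  shows "(\<integral>\<^sup>+x. ennreal ((f x)\<^sup>2) \<partial>lebesgue_on \<Omega>) = ennreal ((L2norm \<Omega> f)\<^sup>2)"
  using assms unfolding L2_iff L2norm_sq intO_eq_integral by (simp add: nn_integral_eq_integral)

lemma L2_components_measurable:
  "(\<And>i. L2 \<Omega> (comp v i)) \<Longrightarrow> v \<in> borel_measurable (lebesgue_on \<Omega>)"
  by (rule borel_measurable_vec_components) (simp add: L2_iff comp_def)

lemma L2_norm_of_L2_components:
  fixes v :: "real^'n \<Rightarrow> real^'n"
  assumes "\<And>i. L2 \<Omega> (comp v i)"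
  shows "L2 \<Omega> (\<lambda>x. norm (v x))"
  unfolding L2_iff power2_norm_vec_eq_sum
  using assms L2_components_measurable[OF assms] by (auto simp: L2_iff comp_def)

lemma L2normv_sq_eq_sum:
  fixes v :: "real^'n \<Rightarrow> real^'n"
  assumes "\<And>i. L2 \<Omega> (comp v i)"
  shows "(L2normv \<Omega> v)\<^sup>2 = (\<Sum>i\<in>UNIV. (L2norm \<Omega> (comp v i))\<^sup>2)"
  using assms unfolding L2normv_eq_L2norm L2norm_sq power2_norm_vec_eq_sum intO_eq_integral
  by (simp add: L2_iff comp_def)

lemma L2normv_le_H1normv:
  assumes "\<And>i. H1 \<Omega> (comp v i)"
  shows "L2normv \<Omega> v \<le> H1normv \<Omega> v"
proof (rule power2_le_imp_le)
  have "\<And>i. L2 \<Omega> (comp v i)"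
    using assms by (simp add: H1_def)
  then have "(L2normv \<Omega> v)\<^sup>2 = (\<Sum>i\<in>UNIV. (L2norm \<Omega> (comp v i))\<^sup>2)"
    by (rule L2normv_sq_eq_sum)
  also have "\<dots> \<le> (\<Sum>i\<in>UNIV. (H1norm \<Omega> (comp v i))\<^sup>2)"
    by (intro sum_mono power_mono L2norm_le_H1norm L2norm_nonneg)
  finally show "(L2normv \<Omega> v)\<^sup>2 \<le> (H1normv \<Omega> v)\<^sup>2"
    by (simp add: H1normv_sq)
qed (rule H1normv_nonneg)

lemma H1_wgrad_measurable: "H1 \<Omega> u \<Longrightarrow> wgrad \<Omega> u \<in> borel_measurable (lebesgue_on \<Omega>)"
  by (intro L2_components_measurable H1_wgrad_L2)

lemma H1_norm_wgrad_L2: "H1 \<Omega> u \<Longrightarrow> L2 \<Omega> (\<lambda>x. norm (wgrad \<Omega> u x))"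
  by (intro L2_norm_of_L2_components H1_wgrad_L2)

lemma form_a_self:
  assumes "\<And>i. H1 \<Omega> (comp u i)"
  shows "form_a \<mu> \<Omega> u u = \<mu> * (H1semiv \<Omega> u)\<^sup>2"
proof -
  have "intO \<Omega> (\<lambda>x. \<Sum>i\<in>UNIV. wgrad \<Omega> (comp u i) x \<bullet> wgrad \<Omega> (comp u i) x)
      = (\<Sum>i\<in>UNIV. intO \<Omega> (\<lambda>x. (norm (wgrad \<Omega> (comp u i) x))\<^sup>2))"
    using H1_norm_wgrad_L2[OF assms]
    by (simp add: intO_eq_integral L2_iff power2_norm_eq_inner)
  then show ?thesis
    by (simp add: form_a_def H1semiv_sq H1semi_eq_L2norm L2norm_sq)
qed

lemma form_G_bound:
  assumes "L2 \<Omega> g" "L2 \<Omega> \<phi>"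
  shows "\<bar>form_G \<Omega> g \<phi>\<bar> \<le> L2norm \<Omega> g * L2norm \<Omega> \<phi>"
  unfolding form_G_def intO_eq_integral
proof (rule abs_integral_le_of_majorant)
  show "(\<integral>\<^sup>+x. ennreal (\<bar>g x\<bar> * \<bar>\<phi> x\<bar>) \<partial>lebesgue_on \<Omega>) \<le> ennreal (L2norm \<Omega> g * L2norm \<Omega> \<phi>)"
    using assms by (intro nn_integral_mult_le_L2_bounds)
      (auto simp: L2_iff nn_integral_sq_eq_L2norm L2norm_nonneg)
qed (auto simp: abs_mult L2norm_nonneg)

lemma form_F_bound:
  assumes f: "\<And>i. L2 \<Omega> (comp f i)" and g: "L2 \<Omega> g" and \<psi>: "L2 \<Omega> \<psi>"
    and u: "\<And>i. L2 \<Omega> (comp u i)"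
    and E: "AE x in lebesgue_on \<Omega>. norm (E x) \<le> Ebar"
    and \<kappa>: "AE x in lebesgue_on \<Omega>. \<bar>\<kappa> (\<psi> x)\<bar> \<le> Kbar * \<bar>\<psi> x\<bar>"
    and "0 \<le> Ebar" "0 \<le> Kbar"
  shows "\<bar>form_F \<Omega> \<kappa> f g E \<psi> u\<bar>
    \<le> (L2normv \<Omega> f + Ebar * L2norm \<Omega> g + Kbar * Ebar * L2norm \<Omega> \<psi>) * L2normv \<Omega> u"
  unfolding form_F_def intO_eq_integral
proof (rule abs_integral_le_of_majorant
    [where k = "\<lambda>x. (norm (f x) + Ebar * \<bar>g x\<bar> + Kbar * Ebar * \<bar>\<psi> x\<bar>) * norm (u x)"])
  show "AE x in lebesgue_on \<Omega>. \<bar>(f x + (g x - \<kappa> (\<psi> x)) *\<^sub>R E x) \<bullet> u x\<bar>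
      \<le> (norm (f x) + Ebar * \<bar>g x\<bar> + Kbar * Ebar * \<bar>\<psi> x\<bar>) * norm (u x)"
    using E \<kappa> by eventually_elim (rule abs_inner_forcing_le)
  have Lf: "L2 \<Omega> (\<lambda>x. norm (f x))" and Lu: "L2 \<Omega> (\<lambda>x. norm (u x))"
    using f u by (auto intro: L2_norm_of_L2_components)
  have [measurable]: "(\<lambda>x. norm (f x)) \<in> borel_measurable (lebesgue_on \<Omega>)"
    "(\<lambda>x. norm (u x)) \<in> borel_measurable (lebesgue_on \<Omega>)"
    "g \<in> borel_measurable (lebesgue_on \<Omega>)" "\<psi> \<in> borel_measurable (lebesgue_on \<Omega>)"
    using Lf Lu g \<psi> by (simp_all add: L2_iff)
  have Cauchy_Schwarz: "(\<integral>\<^sup>+x. ennreal (\<bar>a x\<bar> * norm (u x)) \<partial>lebesgue_on \<Omega>)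
      \<le> ennreal (L2norm \<Omega> a * L2normv \<Omega> u)" if "L2 \<Omega> a" for a
    using that Lu by (intro nn_integral_mult_le_L2_bounds)
      (auto simp: L2_iff nn_integral_sq_eq_L2norm L2norm_nonneg L2normv_eq_L2norm)
  have "(\<integral>\<^sup>+x. ennreal (\<bar>norm (f x)\<bar> * norm (u x) + Ebar * (\<bar>g x\<bar> * norm (u x))
        + Kbar * Ebar * (\<bar>\<psi> x\<bar> * norm (u x))) \<partial>lebesgue_on \<Omega>)
      \<le> ennreal (L2norm \<Omega> (\<lambda>x. norm (f x)) * L2normv \<Omega> u + Ebar * (L2norm \<Omega> g * L2normv \<Omega> u)
        + Kbar * Ebar * (L2norm \<Omega> \<psi> * L2normv \<Omega> u))"
    using Lf g \<psi> assms(7,8)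
    by (intro nn_integral_add_le_ennreal nn_integral_cmult_le_ennreal Cauchy_Schwarz)
      (auto simp: L2norm_nonneg L2normv_eq_L2norm)
  then show "(\<integral>\<^sup>+x. ennreal ((norm (f x) + Ebar * \<bar>g x\<bar> + Kbar * Ebar * \<bar>\<psi> x\<bar>) * norm (u x))
      \<partial>lebesgue_on \<Omega>) \<le> ennreal ((L2normv \<Omega> f + Ebar * L2norm \<Omega> g + Kbar * Ebar * L2norm \<Omega> \<psi>)
        * L2normv \<Omega> u)"
    by (simp add: algebra_simps L2normv_eq_L2norm)
qed (use assms(7,8) in \<open>auto simp: L2norm_nonneg L2normv_eq_L2norm\<close>)

context
  fixes Csob :: real
  assumes sobolev: "\<forall>\<phi>. H1 \<Omega> \<phi> \<longrightarrow>
    (\<integral>\<^sup>+x. indicator \<Omega> x * ennreal ((\<phi> x)^4) \<partial>lebesgue) \<le> ennreal ((Csob * H1norm \<Omega> \<phi>)^4)"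
begin

lemma L4_bound:
  assumes "H1 \<Omega> \<phi>"
  shows "(\<integral>\<^sup>+x. ennreal ((\<phi> x)^4) \<partial>lebesgue_on \<Omega>) \<le> ennreal ((Csob * H1norm \<Omega> \<phi>)^4)"
  using sobolev assms \<Omega>_sets by (simp add: nn_integral_restrict_space mult.commute)

lemma L4_bound_vec:
  fixes u :: "real^'n \<Rightarrow> real^'n"
  assumes u: "\<And>i. H1 \<Omega> (comp u i)"
  shows "(\<integral>\<^sup>+x. ennreal (norm (u x) ^ 4) \<partial>lebesgue_on \<Omega>) \<le> ennreal ((Csob * H1normv \<Omega> u)^4)"
proof -
  define c where "c i = (Csob * H1norm \<Omega> (comp u i))\<^sup>2" for i
  have [measurable]: "comp u i \<in> borel_measurable (lebesgue_on \<Omega>)" for i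
    using u by (simp add: H1_def L2_iff)
  have "norm (u x) ^ 4 = (\<Sum>i\<in>UNIV. \<Sum>j\<in>UNIV. (comp u i x)\<^sup>2 * (comp u j x)\<^sup>2)" for x
    by (simp add: power2_norm_vec_eq_sum[symmetric] sum_product[symmetric] comp_def
        flip: power2_eq_square power_mult)
  then have "(\<integral>\<^sup>+x. ennreal (norm (u x) ^ 4) \<partial>lebesgue_on \<Omega>)
      = (\<integral>\<^sup>+x. (\<Sum>i\<in>UNIV. \<Sum>j\<in>UNIV. ennreal ((comp u i x)\<^sup>2 * (comp u j x)\<^sup>2)) \<partial>lebesgue_on \<Omega>)"
    by (simp add: sum_nonneg)
  also have "\<dots> = (\<Sum>i\<in>UNIV. \<Sum>j\<in>UNIV. \<integral>\<^sup>+x. ennreal ((comp u i x)\<^sup>2 * (comp u j x)\<^sup>2) \<partial>lebesgue_on \<Omega>)"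
    by (simp add: nn_integral_sum del: sum_ennreal)
  also have "\<dots> \<le> (\<Sum>i\<in>UNIV. \<Sum>j\<in>UNIV. ennreal (c i * c j))"
  proof (intro sum_mono)
    fix i j
    have "(\<integral>\<^sup>+x. ennreal (((comp u k x)\<^sup>2)\<^sup>2) \<partial>lebesgue_on \<Omega>) \<le> ennreal ((c k)\<^sup>2)" for k
      using L4_bound[OF u] by (simp add: c_def flip: power_mult)
    then show "(\<integral>\<^sup>+x. ennreal ((comp u i x)\<^sup>2 * (comp u j x)\<^sup>2) \<partial>lebesgue_on \<Omega>) \<le> ennreal (c i * c j)"
      by (intro nn_integral_mult_le_L2_bounds) (auto simp: c_def)
  qed
  also have "\<dots> = ennreal ((\<Sum>i\<in>UNIV. c i)\<^sup>2)"
    by (simp add: c_def sum_nonneg power2_eq_square sum_product)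
  also have "(\<Sum>i\<in>UNIV. c i) = (Csob * H1normv \<Omega> u)\<^sup>2"
    by (simp add: c_def H1normv_sq power_mult_distrib sum_distrib_left)
  finally show ?thesis
    by (simp flip: power_mult)
qed

lemma form_c_self_bound:
  assumes w: "\<And>i. H1 \<Omega> (comp w i)" and \<psi>: "H1 \<Omega> \<psi>" and "0 \<le> Csob"
  shows "\<bar>form_c \<Omega> w \<psi> \<psi>\<bar> \<le> Csob\<^sup>2 * H1normv \<Omega> w * H1semi \<Omega> \<psi> * H1norm \<Omega> \<psi>"
  unfolding form_c_def intO_eq_integral
proof (rule abs_integral_le_of_majorant
    [where k = "\<lambda>x. norm (w x) * norm (wgrad \<Omega> \<psi> x) * \<bar>\<psi> x\<bar>"])
  show "AE x in lebesgue_on \<Omega>. \<bar>(w x \<bullet> wgrad \<Omega> \<psi> x) * \<psi> x\<bar> \<le> norm (w x) * norm (wgrad \<Omega> \<psi> x) * \<bar>\<psi> x\<bar>"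
    by (simp add: abs_mult Cauchy_Schwarz_ineq2 mult_right_mono)
  have [measurable]: "w \<in> borel_measurable (lebesgue_on \<Omega>)"
    "wgrad \<Omega> \<psi> \<in> borel_measurable (lebesgue_on \<Omega>)" "\<psi> \<in> borel_measurable (lebesgue_on \<Omega>)"
    using w \<psi> by (auto simp: H1_wgrad_measurable L2_components_measurable H1_def L2_iff)
  have "(\<integral>\<^sup>+x. ennreal (norm (w x) * norm (wgrad \<Omega> \<psi> x) * \<bar>\<psi> x\<bar>) \<partial>lebesgue_on \<Omega>)
      \<le> ennreal ((Csob * H1normv \<Omega> w) * H1semi \<Omega> \<psi> * (Csob * H1norm \<Omega> \<psi>))"
  proof (rule nn_integral_mult3_le_L4_L2_L4_bounds)
    show "(\<integral>\<^sup>+x. ennreal (norm (w x) ^ 4) \<partial>lebesgue_on \<Omega>) \<le> ennreal ((Csob * H1normv \<Omega> w) ^ 4)"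
      using w by (rule L4_bound_vec)
    show "(\<integral>\<^sup>+x. ennreal ((norm (wgrad \<Omega> \<psi> x))\<^sup>2) \<partial>lebesgue_on \<Omega>) \<le> ennreal ((H1semi \<Omega> \<psi>)\<^sup>2)"
      using \<psi> by (simp add: H1_norm_wgrad_L2 nn_integral_sq_eq_L2norm H1semi_eq_L2norm)
    show "(\<integral>\<^sup>+x. ennreal (\<bar>\<psi> x\<bar> ^ 4) \<partial>lebesgue_on \<Omega>) \<le> ennreal ((Csob * H1norm \<Omega> \<psi>) ^ 4)"
      using L4_bound[OF \<psi>] by simp
  qed (use \<open>0 \<le> Csob\<close> in \<open>auto simp: H1normv_nonneg H1semi_nonneg H1norm_nonneg\<close>)
  then show "(\<integral>\<^sup>+x. ennreal (norm (w x) * norm (wgrad \<Omega> \<psi> x) * \<bar>\<psi> x\<bar>) \<partial>lebesgue_on \<Omega>)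
      \<le> ennreal (Csob\<^sup>2 * H1normv \<Omega> w * H1semi \<Omega> \<psi> * H1norm \<Omega> \<psi>)"
    by (simp add: power2_eq_square mult_ac)
qed (simp add: H1normv_nonneg H1semi_nonneg H1norm_nonneg)

lemma form_A_self_bound:
  assumes u: "\<And>i. H1 \<Omega> (comp u i)" and \<psi>: "H1 \<Omega> \<psi>"
    and E: "AE x in lebesgue_on \<Omega>. norm (E x) \<le> Ebar" and "0 \<le> Ebar" "0 \<le> Csob"
  shows "\<bar>form_A \<Omega> E \<psi> u u\<bar> \<le> Ebar * Csob\<^sup>2 * (H1normv \<Omega> u)\<^sup>2 * H1semi \<Omega> \<psi>"
  unfolding form_A_def intO_eq_integral
proof (rule abs_integral_le_of_majorant
    [where k = "\<lambda>x. Ebar * (norm (u x) * norm (wgrad \<Omega> \<psi> x) * norm (u x))"])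
  show "AE x in lebesgue_on \<Omega>. \<bar>(u x \<bullet> wgrad \<Omega> \<psi> x) * (E x \<bullet> u x)\<bar>
      \<le> Ebar * (norm (u x) * norm (wgrad \<Omega> \<psi> x) * norm (u x))"
    using E
  proof eventually_elim
    case (elim x)
    have "\<bar>E x \<bullet> u x\<bar> \<le> Ebar * norm (u x)"
      using Cauchy_Schwarz_ineq2[of "E x" "u x"] elim by (meson mult_right_mono norm_ge_zero order_trans)
    then show ?case
      using Cauchy_Schwarz_ineq2[of "u x" "wgrad \<Omega> \<psi> x"]
      by (auto simp: abs_mult algebra_simps intro: order_trans[OF mult_mono])
  qed
  have [measurable]: "u \<in> borel_measurable (lebesgue_on \<Omega>)"
    "wgrad \<Omega> \<psi> \<in> borel_measurable (lebesgue_on \<Omega>)"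
    using u \<psi> by (auto simp: H1_wgrad_measurable L2_components_measurable H1_def)
  have "(\<integral>\<^sup>+x. ennreal (norm (u x) * norm (wgrad \<Omega> \<psi> x) * norm (u x)) \<partial>lebesgue_on \<Omega>)
      \<le> ennreal ((Csob * H1normv \<Omega> u) * H1semi \<Omega> \<psi> * (Csob * H1normv \<Omega> u))"
  proof (rule nn_integral_mult3_le_L4_L2_L4_bounds)
    show "(\<integral>\<^sup>+x. ennreal ((norm (wgrad \<Omega> \<psi> x))\<^sup>2) \<partial>lebesgue_on \<Omega>) \<le> ennreal ((H1semi \<Omega> \<psi>)\<^sup>2)"
      using \<psi> by (simp add: H1_norm_wgrad_L2 nn_integral_sq_eq_L2norm H1semi_eq_L2norm)
  qed (use L4_bound_vec[OF u] \<open>0 \<le> Csob\<close> in \<open>auto simp: H1normv_nonneg H1semi_nonneg\<close>)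
  then have "(\<integral>\<^sup>+x. ennreal (Ebar * (norm (u x) * norm (wgrad \<Omega> \<psi> x) * norm (u x))) \<partial>lebesgue_on \<Omega>)
      \<le> ennreal (Ebar * ((Csob * H1normv \<Omega> u) * H1semi \<Omega> \<psi> * (Csob * H1normv \<Omega> u)))"
    using \<open>0 \<le> Ebar\<close> \<open>0 \<le> Csob\<close>
    by (intro nn_integral_cmult_le_ennreal) (auto simp: H1normv_nonneg H1semi_nonneg)
  then show "(\<integral>\<^sup>+x. ennreal (Ebar * (norm (u x) * norm (wgrad \<Omega> \<psi> x) * norm (u x))) \<partial>lebesgue_on \<Omega>)
      \<le> ennreal (Ebar * Csob\<^sup>2 * (H1normv \<Omega> u)\<^sup>2 * H1semi \<Omega> \<psi>)"
    by (simp add: power2_eq_square mult_ac)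
qed (use \<open>0 \<le> Ebar\<close> in \<open>simp add: H1normv_nonneg H1semi_nonneg\<close>)

lemma potential_energy_estimate:
  assumes "0 < \<epsilon>" "0 \<le> Cp" "0 \<le> Csob" "0 < k0" "0 < k1" and g: "L2 \<Omega> g"
    and w: "\<And>i. H1 \<Omega> (comp w i)" and small: "2 * Cp^2 * Csob^2 * H1normv \<Omega> w \<le> \<epsilon>"
    and \<psi>: "H1 \<Omega> \<psi>" and poincare: "H1norm \<Omega> \<psi> \<le> Cp * H1semi \<Omega> \<psi>"
    and tested: "intO \<Omega> (\<lambda>x. kappa k0 k1 (\<psi> x) * \<psi> x) + form_c \<Omega> w \<psi> \<psi> + form_d \<epsilon> \<Omega> \<psi> \<psi>
      = form_G \<Omega> g \<psi>"
  shows "H1norm \<Omega> \<psi> \<le> 2 * Cp^2 / \<epsilon> * L2norm \<Omega> g"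
proof -
  let ?s = "H1semi \<Omega> \<psi>" and ?n = "H1norm \<Omega> \<psi>" and ?G = "L2norm \<Omega> g"
  have s_le: "?s \<le> Cp * ?s" and L2_le: "L2norm \<Omega> \<psi> \<le> Cp * ?s"
    using poincare H1semi_le_H1norm L2norm_le_H1norm by (blast intro: order_trans)+
  have "\<bar>form_G \<Omega> g \<psi>\<bar> \<le> ?G * (Cp * ?s)"
    using form_G_bound[OF g] \<psi> L2_le L2norm_nonneg
    by (meson H1_def mult_left_mono order_trans)
  moreover have "\<bar>form_c \<Omega> w \<psi> \<psi>\<bar> \<le> \<epsilon> / 2 * ?s\<^sup>2"
  proof -
    have "?s * ?n \<le> (Cp * ?s) * (Cp * ?s)"
      using s_le poincare H1semi_nonneg[of \<Omega> \<psi>] H1norm_nonneg[of \<Omega> \<psi>]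
      by (intro mult_mono) linarith+
    then have "(Csob\<^sup>2 * H1normv \<Omega> w) * (?s * ?n) \<le> (Csob\<^sup>2 * H1normv \<Omega> w) * ((Cp * ?s) * (Cp * ?s))"
      by (rule mult_left_mono) (simp add: H1normv_nonneg)
    then have "Csob\<^sup>2 * H1normv \<Omega> w * ?s * ?n \<le> (Cp\<^sup>2 * Csob\<^sup>2 * H1normv \<Omega> w) * ?s\<^sup>2"
      by (simp add: power2_eq_square ac_simps)
    also have "\<dots> \<le> \<epsilon> / 2 * ?s\<^sup>2"
      using small by (intro mult_right_mono) auto
    finally show ?thesis
      using form_c_self_bound[OF w \<psi> \<open>0 \<le> Csob\<close>] by linarith
  qed
  moreover have "0 \<le> intO \<Omega> (\<lambda>x. kappa k0 k1 (\<psi> x) * \<psi> x)"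
    using \<open>0 < k0\<close> \<open>0 < k1\<close> by (intro intO_nonneg kappa_mult_self_nonneg)
  ultimately have "\<epsilon> * ?s\<^sup>2 \<le> ?G * (Cp * ?s) + \<epsilon> / 2 * ?s\<^sup>2"
    using tested form_d_self[of \<epsilon> \<Omega> \<psi>] by linarith
  then show ?thesis
    using \<open>0 < \<epsilon>\<close> H1semi_nonneg poincare \<open>0 \<le> Cp\<close> L2norm_nonneg
    by (rule le_of_absorbed_quadratic_bound)
qed

lemma velocity_energy_estimate:
  assumes "0 < \<mu>" "0 \<le> Cp" "0 \<le> Csob" "0 \<le> Ebar" "0 \<le> Kbar"
    and f: "\<And>i. L2 \<Omega> (comp f i)" and g: "L2 \<Omega> g"
    and E: "AE x in lebesgue_on \<Omega>. norm (E x) \<le> Ebar"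
    and \<kappa>: "AE x in lebesgue_on \<Omega>. \<bar>\<kappa> (\<psi> x)\<bar> \<le> Kbar * \<bar>\<psi> x\<bar>"
    and \<psi>: "H1 \<Omega> \<psi>" and small: "2 * Cp^2 * Csob^2 * Ebar * H1norm \<Omega> \<psi> \<le> \<mu>"
    and u: "\<And>i. H1 \<Omega> (comp u i)" and poincare: "H1normv \<Omega> u \<le> Cp * H1semiv \<Omega> u"
    and tested: "form_a \<mu> \<Omega> u u + form_A \<Omega> E \<psi> u u = form_F \<Omega> \<kappa> f g E \<psi> u"
  shows "H1normv \<Omega> u
    \<le> 2 * Cp^2 / \<mu> * (L2normv \<Omega> f + Ebar * L2norm \<Omega> g + Kbar * Ebar * H1norm \<Omega> \<psi>)"
proof -
  let ?S = "H1semiv \<Omega> u" and ?U = "H1normv \<Omega> u"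
  define R where "R = L2normv \<Omega> f + Ebar * L2norm \<Omega> g + Kbar * Ebar * L2norm \<Omega> \<psi>"
  have R_nonneg: "0 \<le> R"
    unfolding R_def L2normv_eq_L2norm using assms(4,5) by (simp add: L2norm_nonneg)
  have "\<bar>form_F \<Omega> \<kappa> f g E \<psi> u\<bar> \<le> R * (Cp * ?S)"
  proof -
    have "\<bar>form_F \<Omega> \<kappa> f g E \<psi> u\<bar> \<le> R * L2normv \<Omega> u"
      unfolding R_def using \<psi> u assms(4,5)
      by (intro form_F_bound[OF f g _ _ E \<kappa>]) (auto simp: H1_def)
    also have "\<dots> \<le> R * (Cp * ?S)"
      using L2normv_le_H1normv[OF u] poincare R_nonneg by (intro mult_left_mono) auto
    finally show ?thesis .
  qed
  moreover have "\<bar>form_A \<Omega> E \<psi> u u\<bar> \<le> \<mu> / 2 * ?S\<^sup>2"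
  proof -
    have "?U\<^sup>2 \<le> (Cp * ?S)\<^sup>2"
      using poincare H1normv_nonneg by (rule power_mono)
    then have "(Ebar * Csob\<^sup>2) * ?U\<^sup>2 \<le> (Ebar * Csob\<^sup>2) * (Cp * ?S)\<^sup>2"
      by (rule mult_left_mono) (simp add: assms(4))
    then have "Ebar * Csob\<^sup>2 * ?U\<^sup>2 * H1semi \<Omega> \<psi> \<le> Ebar * Csob\<^sup>2 * (Cp * ?S)\<^sup>2 * H1norm \<Omega> \<psi>"
      by (rule mult_mono) (simp_all add: H1semi_le_H1norm H1semi_nonneg assms(4))
    also have "\<dots> = (Cp\<^sup>2 * Csob\<^sup>2 * Ebar * H1norm \<Omega> \<psi>) * ?S\<^sup>2"
      by (simp add: power_mult_distrib ac_simps)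
    also have "\<dots> \<le> \<mu> / 2 * ?S\<^sup>2"
      using small by (intro mult_right_mono) auto
    finally show ?thesis
      using form_A_self_bound[OF u \<psi> E assms(4,3)] by linarith
  qed
  ultimately have "\<mu> * ?S\<^sup>2 \<le> R * (Cp * ?S) + \<mu> / 2 * ?S\<^sup>2"
    using tested form_a_self[OF u, of \<mu>] by linarith
  then have "?U \<le> 2 * Cp\<^sup>2 / \<mu> * R"
    using \<open>0 < \<mu>\<close> H1semiv_nonneg poincare \<open>0 \<le> Cp\<close> R_nonneg
    by (rule le_of_absorbed_quadratic_bound)
  also have "\<dots> \<le> 2 * Cp^2 / \<mu> * (L2normv \<Omega> f + Ebar * L2norm \<Omega> g + Kbar * Ebar * H1norm \<Omega> \<psi>)"
    unfolding R_def using assms(1,4,5) L2norm_le_H1norm[of \<Omega> \<psi>]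
    by (intro mult_left_mono add_left_mono mult_left_mono) auto
  finally show ?thesis .
qed

end

end

theorem mainTheorem8:
  fixes \<Omega> \<Gamma>D \<Gamma>N :: "(real^'n) set"
    and \<mu> \<epsilon> k0 k1 \<alpha> \<beta> Kbar Klow Ebar Csob Cp :: real
    and f E :: "real^'n \<Rightarrow> real^'n" and g :: "real^'n \<Rightarrow> real"
  assumes dim: "CARD('n) = 2 \<or> CARD('n) = 3"
    and dom: "lipschitz_domain \<Omega>"
    and bdry: "frontier \<Omega> = \<Gamma>D \<union> \<Gamma>N" and GD_pos: "pos_surface_measure \<Gamma>D"
    and mu: "\<mu> > 0" and eps: "\<epsilon> > 0"
    and f_L2: "\<forall>i. L2 \<Omega> (comp f i)" and g_L2: "L2 \<Omega> g"
    and E_meas: "\<forall>i. set_borel_measurable lebesgue \<Omega> (comp E i)"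
    and E_bound: "AE x in lebesgue. x \<in> \<Omega> \<longrightarrow> norm (E x) \<le> Ebar"
    and k0: "k0 > 0" and k1: "k1 > 0"
    and ab: "\<alpha> \<le> 0" "0 \<le> \<beta>" and K: "Kbar > 0" "Klow > 0"
    and K_bounds: "\<forall>s1\<in>{\<alpha>..\<beta>}. \<forall>s2\<in>{\<alpha>..\<beta>}.
        Klow * \<bar>s1 - s2\<bar> \<le> \<bar>kappa k0 k1 s1 - kappa k0 k1 s2\<bar> \<and>
        \<bar>kappa k0 k1 s1 - kappa k0 k1 s2\<bar> \<le> Kbar * \<bar>s1 - s2\<bar>"
    and Csob: "Csob > 0"
    and sobolev: "\<forall>\<phi>. H1 \<Omega> \<phi> \<longrightarrow>
        (\<integral>\<^sup>+x. indicator \<Omega> x * ennreal ((\<phi> x)^4) \<partial>lebesgue) \<le> ennreal ((Csob * H1norm \<Omega> \<phi>)^4)"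
    and Cp: "Cp > 0"
    and poincare: "\<forall>\<phi>\<in>Phi0 \<Omega> \<Gamma>D. H1norm \<Omega> \<phi> \<le> Cp * H1semi \<Omega> \<phi>"
    and poincare_v: "\<forall>v\<in>Vsp \<Omega> \<Gamma>D. H1normv \<Omega> v \<le> Cp * H1semiv \<Omega> v"
  shows
   "(\<forall>uh\<in>Vsp \<Omega> \<Gamma>D. 2 * Cp^2 * Csob^2 * H1normv \<Omega> uh \<le> \<epsilon> \<longrightarrow>
      (\<forall>\<psi>\<in>Phi \<Omega> \<Gamma>D \<alpha> \<beta>.
         (\<forall>\<phi>\<in>Phi0 \<Omega> \<Gamma>D. intO \<Omega> (\<lambda>x. kappa k0 k1 (\<psi> x) * \<phi> x) + form_c \<Omega> uh \<psi> \<phi>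
              + form_d \<epsilon> \<Omega> \<psi> \<phi> = form_G \<Omega> g \<phi>)
         \<longrightarrow> H1norm \<Omega> \<psi> \<le> 2 * Cp^2 / \<epsilon> * L2norm \<Omega> g))
  \<and> (\<forall>\<psi>h\<in>Phi \<Omega> \<Gamma>D \<alpha> \<beta>. 2 * Cp^2 * Csob^2 * Ebar * H1norm \<Omega> \<psi>h \<le> \<mu> \<longrightarrow>
      (\<forall>u\<in>Vsp \<Omega> \<Gamma>D. \<forall>p. L2 \<Omega> p \<longrightarrow>
         (\<forall>v\<in>Vsp \<Omega> \<Gamma>D. form_a \<mu> \<Omega> u v + form_A \<Omega> E \<psi>h u v + form_b \<Omega> v p
              = form_F \<Omega> (kappa k0 k1) f g E \<psi>h v)
         \<longrightarrow> (\<forall>q. L2 \<Omega> q \<longrightarrow> form_b \<Omega> u q = 0)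
         \<longrightarrow> H1normv \<Omega> u \<le> 2 * Cp^2 / \<mu> * (L2normv \<Omega> f + Ebar * L2norm \<Omega> g + Kbar * Ebar * H1norm \<Omega> \<psi>h)))"
proof -
  (* The geometry of the domain enters only through the assumed Sobolev and Poincare
     constants. *)
  have \<Omega>_sets: "\<Omega> \<in> sets lebesgue" and "open \<Omega>" "\<Omega> \<noteq> {}"
    using dom by (auto simp: lipschitz_domain_def borel_open)
  have "0 \<le> Ebar"
    using AE_lebesgue_open_imp_ex[OF \<open>open \<Omega>\<close> \<open>\<Omega> \<noteq> {}\<close> E_bound] norm_ge_zero order_trans by blast
  have E_AE: "AE x in lebesgue_on \<Omega>. norm (E x) \<le> Ebar"
    using E_bound \<Omega>_sets by (simp add: AE_restrict_space_iff)
  have \<kappa>_AE: "AE x in lebesgue_on \<Omega>. \<bar>kappa k0 k1 (\<psi> x)\<bar> \<le> Kbar * \<bar>\<psi> x\<bar>"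
    if "\<psi> \<in> Phi \<Omega> \<Gamma>D \<alpha> \<beta>" for \<psi>
  proof -
    have "AE x in lebesgue_on \<Omega>. \<psi> x \<in> {\<alpha>..\<beta>}"
      using that \<Omega>_sets by (auto simp: Phi_def AE_restrict_space_iff elim!: eventually_mono)
    moreover have "\<forall>s1\<in>{\<alpha>..\<beta>}. \<forall>s2\<in>{\<alpha>..\<beta>}. \<bar>kappa k0 k1 s1 - kappa k0 k1 s2\<bar> \<le> Kbar * \<bar>s1 - s2\<bar>"
      using K_bounds by blast
    ultimately show ?thesis
      using kappa_abs_le[OF _ ab] by (blast intro: eventually_mono)
  qed
  show ?thesis
  proof (intro conjI ballI impI allI)
    fix uh \<psi>
    assume uh: "uh \<in> Vsp \<Omega> \<Gamma>D" and small: "2 * Cp^2 * Csob^2 * H1normv \<Omega> uh \<le> \<epsilon>"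
      and \<psi>: "\<psi> \<in> Phi \<Omega> \<Gamma>D \<alpha> \<beta>"
      and eq: "\<forall>\<phi>\<in>Phi0 \<Omega> \<Gamma>D. intO \<Omega> (\<lambda>x. kappa k0 k1 (\<psi> x) * \<phi> x) + form_c \<Omega> uh \<psi> \<phi>
        + form_d \<epsilon> \<Omega> \<psi> \<phi> = form_G \<Omega> g \<phi>"
    from \<psi> have "\<psi> \<in> Phi0 \<Omega> \<Gamma>D"
      by (simp add: Phi_def)
    then show "H1norm \<Omega> \<psi> \<le> 2 * Cp^2 / \<epsilon> * L2norm \<Omega> g"
      by (intro potential_energy_estimate[OF \<Omega>_sets sobolev eps _ _ k0 k1 g_L2 _ small])
        (use uh eq poincare Cp Csob in \<open>auto simp: Vsp_components_H1 Phi0_def\<close>)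
  next
    fix \<psi>h u p
    assume \<psi>h: "\<psi>h \<in> Phi \<Omega> \<Gamma>D \<alpha> \<beta>" and small: "2 * Cp^2 * Csob^2 * Ebar * H1norm \<Omega> \<psi>h \<le> \<mu>"
      and u: "u \<in> Vsp \<Omega> \<Gamma>D" and "L2 \<Omega> p"
      and eq: "\<forall>v\<in>Vsp \<Omega> \<Gamma>D. form_a \<mu> \<Omega> u v + form_A \<Omega> E \<psi>h u v + form_b \<Omega> v p
        = form_F \<Omega> (kappa k0 k1) f g E \<psi>h v"
      and div_free: "\<forall>q. L2 \<Omega> q \<longrightarrow> form_b \<Omega> u q = 0"
    from eq u div_free \<open>L2 \<Omega> p\<close>
    have "form_a \<mu> \<Omega> u u + form_A \<Omega> E \<psi>h u u = form_F \<Omega> (kappa k0 k1) f g E \<psi>h u"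
      by force
    then show "H1normv \<Omega> u
      \<le> 2 * Cp^2 / \<mu> * (L2normv \<Omega> f + Ebar * L2norm \<Omega> g + Kbar * Ebar * H1norm \<Omega> \<psi>h)"
      by (intro velocity_energy_estimate[OF \<Omega>_sets sobolev mu _ _ \<open>0 \<le> Ebar\<close> _ _ g_L2 E_AE
            \<kappa>_AE[OF \<psi>h] Phi_H1[OF \<psi>h] small])
        (use u f_L2 poincare_v Cp Csob K in \<open>auto simp: Vsp_components_H1\<close>)
  qed
qed

end
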